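(* Let $\mathbf G$ and $\mathbf H$ be power-associative loops. Then $\mathcal G(\mathbf G)\cong\mathcal G(\mathbf H)$ if and only if $\mathcal G^{\pm}(\mathbf G)\cong\mathcal G^{\pm}(\mathbf H)$.
   Context: A loop is power-associative if every subloop generated by one element is a group; powers $x^n$ are computed in $\langle x\rangle$. The power graph $\mathcal G(\mathbf G)$ has vertex set $G$, distinct $x,y$ adjacent iff $y=x^n$ or $x=y^n$ for some $n\in\mathbb Z$. The $Z^\pm$-power graph $\mathcal G^{\pm}(\mathbf G)$ has vertex set $G$, distinct $x,y$ adjacent iff $y=x^n$ or $x=y^n$ for some $n\in\mathbb Z\setminus\{0\}$. Isomorphism means isomorphism of simple graphs. *)

theory Defs
  imports "HOL-Algebra.Group"
begin

definition loop :: "('a, 'b) monoid_scheme \<Rightarrow> bool" where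
  "loop G \<longleftrightarrow>
     \<one>\<^bsub>G\<^esub> \<in> carrier G \<and>
     (\<forall>a\<in>carrier G. \<forall>b\<in>carrier G. a \<otimes>\<^bsub>G\<^esub> b \<in> carrier G) \<and>
     (\<forall>a\<in>carrier G. \<one>\<^bsub>G\<^esub> \<otimes>\<^bsub>G\<^esub> a = a \<and> a \<otimes>\<^bsub>G\<^esub> \<one>\<^bsub>G\<^esub> = a) \<and>
     (\<forall>a\<in>carrier G. \<forall>b\<in>carrier G. \<exists>!x. x \<in> carrier G \<and> a \<otimes>\<^bsub>G\<^esub> x = b) \<and>
     (\<forall>a\<in>carrier G. \<forall>b\<in>carrier G. \<exists>!y. y \<in> carrier G \<and> y \<otimes>\<^bsub>G\<^esub> a = b)"

definition subloop :: "('a, 'b) monoid_scheme \<Rightarrow> 'a set \<Rightarrow> bool" where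
  "subloop G S \<longleftrightarrow>
     S \<subseteq> carrier G \<and> \<one>\<^bsub>G\<^esub> \<in> S \<and>
     (\<forall>a\<in>S. \<forall>b\<in>S. a \<otimes>\<^bsub>G\<^esub> b \<in> S) \<and>
     (\<forall>a\<in>S. \<forall>b\<in>S. \<forall>x\<in>carrier G. a \<otimes>\<^bsub>G\<^esub> x = b \<longrightarrow> x \<in> S) \<and>
     (\<forall>a\<in>S. \<forall>b\<in>S. \<forall>y\<in>carrier G. y \<otimes>\<^bsub>G\<^esub> a = b \<longrightarrow> y \<in> S)"

definition loop_gen :: "('a, 'b) monoid_scheme \<Rightarrow> 'a \<Rightarrow> 'a set" where
  "loop_gen G x = \<Inter>{S. subloop G S \<and> x \<in> S}"

definition power_assoc_loop :: "('a, 'b) monoid_scheme \<Rightarrow> bool" where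
  "power_assoc_loop G \<longleftrightarrow> loop G \<and>
     (\<forall>x\<in>carrier G. group (G\<lparr>carrier := loop_gen G x\<rparr>))"

definition lpow :: "('a, 'b) monoid_scheme \<Rightarrow> 'a \<Rightarrow> int \<Rightarrow> 'a" where
  "lpow G x n = x [^]\<^bsub>G\<lparr>carrier := loop_gen G x\<rparr>\<^esub> n"

definition power_adj :: "('a, 'b) monoid_scheme \<Rightarrow> 'a \<Rightarrow> 'a \<Rightarrow> bool" where
  "power_adj G x y \<longleftrightarrow> x \<noteq> y \<and>
     ((\<exists>n::int. y = lpow G x n) \<or> (\<exists>n::int. x = lpow G y n))"

definition power_adj_pm :: "('a, 'b) monoid_scheme \<Rightarrow> 'a \<Rightarrow> 'a \<Rightarrow> bool" where
  "power_adj_pm G x y \<longleftrightarrow> x \<noteq> y \<and>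
     ((\<exists>n::int. n \<noteq> 0 \<and> y = lpow G x n) \<or> (\<exists>n::int. n \<noteq> 0 \<and> x = lpow G y n))"

definition graph_iso :: "'a set \<Rightarrow> ('a \<Rightarrow> 'a \<Rightarrow> bool) \<Rightarrow> 'b set \<Rightarrow> ('b \<Rightarrow> 'b \<Rightarrow> bool) \<Rightarrow> bool" where
  "graph_iso V E W F \<longleftrightarrow> (\<exists>f. bij_betw f V W \<and>
     (\<forall>x\<in>V. \<forall>y\<in>V. E x y \<longleftrightarrow> F (f x) (f y)))"

end

(*
  Off the identity the two graphs coincide, since the exponent 0 only ever produces 1; the
  identity is adjacent to every vertex of the power graph but only to the torsion elements in
  the Z\<plusminus>-power graph. An isomorphism of either graph can be made to fix the identity by composing
  with the transposition of the identity and a closed twin of it, so it suffices to see that an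
  isomorphism of Z\<plusminus>-power graphs preserves torsion of non-identity elements.

  Torsion is in fact a graph invariant. A non-torsion x lies in the 4-clique {x, x^2, x^4, x^8}
  whose vertices are pairwise non-twins and each have at most one twin besides themselves (the
  closed twins of a non-torsion y are y and y^-1). A non-identity torsion element lies in no such
  clique: three of its non-identity vertices would be torsion elements forming a chain of proper
  powers u < v < w, which forces ord w \<ge> 8, and then w, w^-1 and w^k for a unit k, k \<noteq> \<plusminus>1
  mod ord w, are three distinct closed twins.
*)

theory Submission
  imports Defs "HOL-Algebra.Multiplicative_Group" "HOL-Number_Theory.Cong" "HOL-Combinatorics.Transposition"
begin

definition graph_iso_map ::
  "('a \<Rightarrow> 'b) \<Rightarrow> 'a set \<Rightarrow> ('a \<Rightarrow> 'a \<Rightarrow> bool) \<Rightarrow> 'b set \<Rightarrow> ('b \<Rightarrow> 'b \<Rightarrow> bool) \<Rightarrow> bool" where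
  "graph_iso_map f V E W F \<longleftrightarrow> bij_betw f V W \<and> (\<forall>x\<in>V. \<forall>y\<in>V. E x y \<longleftrightarrow> F (f x) (f y))"

lemma graph_iso_iff_map: "graph_iso V E W F \<longleftrightarrow> (\<exists>f. graph_iso_map f V E W F)"
  unfolding graph_iso_def graph_iso_map_def ..

lemma graph_iso_mapD:
  assumes "graph_iso_map f V E W F"
  shows graph_iso_map_bij: "bij_betw f V W"
    and graph_iso_map_in: "x \<in> V \<Longrightarrow> f x \<in> W"
    and graph_iso_map_adj: "x \<in> V \<Longrightarrow> y \<in> V \<Longrightarrow> F (f x) (f y) \<longleftrightarrow> E x y"
    and graph_iso_map_eq: "x \<in> V \<Longrightarrow> y \<in> V \<Longrightarrow> f x = f y \<longleftrightarrow> x = y"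
  using assms unfolding graph_iso_map_def bij_betw_def inj_on_def by auto

lemma graph_iso_map_surj:
  "graph_iso_map f V E W F \<Longrightarrow> y \<in> W \<Longrightarrow> \<exists>x\<in>V. y = f x"
  unfolding graph_iso_map_def bij_betw_def by blast

lemma graph_iso_map_inv_into:
  assumes f: "graph_iso_map f V E W F"
  shows "graph_iso_map (inv_into V f) W F V E"
proof -
  have bij: "bij_betw f V W" using f by (rule graph_iso_map_bij)
  have inv_in: "inv_into V f x \<in> V" if "x \<in> W" for x
    using bij_betw_apply[OF bij_betw_inv_into[OF bij] that] .
  have "F x y \<longleftrightarrow> E (inv_into V f x) (inv_into V f y)" if "x \<in> W" "y \<in> W" for x y
  proof -
    have "F x y \<longleftrightarrow> F (f (inv_into V f x)) (f (inv_into V f y))"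
      using bij_betw_inv_into_right[OF bij] that by simp
    also have "\<dots> \<longleftrightarrow> E (inv_into V f x) (inv_into V f y)"
      using graph_iso_map_adj[OF f] inv_in that by simp
    finally show ?thesis .
  qed
  then show ?thesis
    unfolding graph_iso_map_def using bij_betw_inv_into[OF bij] by blast
qed

lemma graph_iso_map_comp:
  assumes f: "graph_iso_map f V E W F" and g: "graph_iso_map g W F U D"
  shows "graph_iso_map (g \<circ> f) V E U D"
proof -
  have "bij_betw (g \<circ> f) V U"
    using graph_iso_map_bij[OF f] graph_iso_map_bij[OF g] by (rule bij_betw_trans)
  moreover have "E x y \<longleftrightarrow> D ((g \<circ> f) x) ((g \<circ> f) y)" if "x \<in> V" "y \<in> V" for x y
    using that graph_iso_map_adj[OF f] graph_iso_map_adj[OF g] graph_iso_map_in[OF f] by simp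
  ultimately show ?thesis unfolding graph_iso_map_def by blast
qed

lemma graph_iso_map_remove_vertex:
  assumes f: "graph_iso_map f V E W F" and a: "a \<in> V"
  shows "graph_iso_map f (V - {a}) E (W - {f a}) F"
  using f a bij_betw_DiffI[OF graph_iso_map_bij[OF f], of "{a}" "{f a}"] graph_iso_map_in[OF f a]
  unfolding graph_iso_map_def by auto

definition closed_twins :: "'a set \<Rightarrow> ('a \<Rightarrow> 'a \<Rightarrow> bool) \<Rightarrow> 'a \<Rightarrow> 'a \<Rightarrow> bool" where
  "closed_twins V E x y \<longleftrightarrow> x \<in> V \<and> y \<in> V \<and> (\<forall>w\<in>V. (w = x \<or> E x w) \<longleftrightarrow> (w = y \<or> E y w))"

definition at_most_one_twin :: "'a set \<Rightarrow> ('a \<Rightarrow> 'a \<Rightarrow> bool) \<Rightarrow> 'a \<Rightarrow> bool" where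
  "at_most_one_twin V E x \<longleftrightarrow>
     (\<forall>y z. closed_twins V E x y \<longrightarrow> closed_twins V E x z \<longrightarrow> y = x \<or> z = x \<or> y = z)"

definition rigid_clique :: "'a set \<Rightarrow> ('a \<Rightarrow> 'a \<Rightarrow> bool) \<Rightarrow> 'a set \<Rightarrow> bool" where
  "rigid_clique V E X \<longleftrightarrow> X \<subseteq> V \<and>
     (\<forall>x\<in>X. \<forall>y\<in>X. x \<noteq> y \<longrightarrow> E x y \<and> \<not> closed_twins V E x y) \<and>
     (\<forall>x\<in>X. at_most_one_twin V E x)"

definition in_rigid_4clique :: "'a set \<Rightarrow> ('a \<Rightarrow> 'a \<Rightarrow> bool) \<Rightarrow> 'a \<Rightarrow> bool" where
  "in_rigid_4clique V E x \<longleftrightarrow> (\<exists>X. x \<in> X \<and> card X = 4 \<and> rigid_clique V E X)"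

lemma closed_twins_sym: "closed_twins V E x y \<Longrightarrow> closed_twins V E y x"
  unfolding closed_twins_def by blast

lemma rigid_clique_subset: "rigid_clique V E X \<Longrightarrow> Y \<subseteq> X \<Longrightarrow> rigid_clique V E Y"
  unfolding rigid_clique_def by blast

lemma closed_twins_iso:
  assumes f: "graph_iso_map f V E W F" and x: "x \<in> V" and y: "y \<in> V"
  shows "closed_twins W F (f x) (f y) \<longleftrightarrow> closed_twins V E x y"
proof -
  have W: "W = f ` V" using graph_iso_map_bij[OF f] by (simp add: bij_betw_def)
  have "(w = x \<or> E x w) \<longleftrightarrow> (f w = f x \<or> F (f x) (f w))"
    and "(w = y \<or> E y w) \<longleftrightarrow> (f w = f y \<or> F (f y) (f w))" if "w \<in> V" for w
    using that x y graph_iso_map_adj[OF f] graph_iso_map_eq[OF f] by simp_all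
  then show ?thesis
    unfolding closed_twins_def using x y by (simp add: W)
qed

lemma at_most_one_twin_image:
  assumes f: "graph_iso_map f V E W F" and x: "x \<in> V" and one: "at_most_one_twin V E x"
  shows "at_most_one_twin W F (f x)"
  unfolding at_most_one_twin_def
proof (intro allI impI)
  fix y' z' assume y': "closed_twins W F (f x) y'" and z': "closed_twins W F (f x) z'"
  then have "y' \<in> W" "z' \<in> W" unfolding closed_twins_def by blast+
  then obtain y z where yz: "y \<in> V" "z \<in> V" "y' = f y" "z' = f z"
    using graph_iso_map_surj[OF f] by metis
  then have "closed_twins V E x y" "closed_twins V E x z"
    using y' z' closed_twins_iso[OF f x] by auto
  then have "y = x \<or> z = x \<or> y = z" using one unfolding at_most_one_twin_def by blast
  then show "y' = f x \<or> z' = f x \<or> y' = z'" using yz by blast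
qed

lemma rigid_clique_image:
  assumes f: "graph_iso_map f V E W F" and X: "rigid_clique V E X"
  shows "rigid_clique W F (f ` X)"
proof -
  have XV: "X \<subseteq> V" using X unfolding rigid_clique_def by blast
  have "F (f x) (f y) \<and> \<not> closed_twins W F (f x) (f y)" if "x \<in> X" "y \<in> X" "f x \<noteq> f y" for x y
  proof -
    have "x \<in> V" "y \<in> V" using that XV by blast+
    then show ?thesis
      using X that closed_twins_iso[OF f, of x y] graph_iso_map_adj[OF f, of x y]
      unfolding rigid_clique_def by auto
  qed
  moreover have "at_most_one_twin W F (f x)" if "x \<in> X" for x
    using X that XV at_most_one_twin_image[OF f] unfolding rigid_clique_def by auto
  ultimately show ?thesis
    unfolding rigid_clique_def using XV graph_iso_map_in[OF f] by (auto simp: image_subset_iff)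
qed

lemma in_rigid_4clique_image:
  assumes f: "graph_iso_map f V E W F" and "in_rigid_4clique V E x"
  shows "in_rigid_4clique W F (f x)"
proof -
  obtain X where X: "x \<in> X" "card X = 4" "rigid_clique V E X"
    using assms(2) unfolding in_rigid_4clique_def by blast
  have "inj_on f X"
    using X(3) graph_iso_map_eq[OF f] unfolding rigid_clique_def inj_on_def by blast
  then have "card (f ` X) = 4" using X(2) by (simp add: card_image)
  then show ?thesis
    unfolding in_rigid_4clique_def using X rigid_clique_image[OF f] by blast
qed

lemma in_rigid_4clique_iso:
  assumes f: "graph_iso_map f V E W F" and x: "x \<in> V"
  shows "in_rigid_4clique W F (f x) \<longleftrightarrow> in_rigid_4clique V E x"
  using in_rigid_4clique_image[OF f] in_rigid_4clique_image[OF graph_iso_map_inv_into[OF f], of "f x"]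
    bij_betw_inv_into_left[OF graph_iso_map_bij[OF f] x] by auto

lemma graph_iso_map_transpose_twins:
  assumes "closed_twins V E a b" and sym: "\<And>x y. E x y \<longleftrightarrow> E y x" and irrefl: "\<And>x. \<not> E x x"
  shows "graph_iso_map (transpose a b) V E V E"
proof -
  have ab: "a \<in> V" "b \<in> V" and tw: "\<And>w. w \<in> V \<Longrightarrow> (w = a \<or> E a w) \<longleftrightarrow> (w = b \<or> E b w)"
    using assms(1) unfolding closed_twins_def by blast+
  have other: "E a w \<longleftrightarrow> E b w" if "w \<in> V" "w \<noteq> a" "w \<noteq> b" for w
    using tw[OF that(1)] that(2,3) by blast
  have "E x y \<longleftrightarrow> E (transpose a b x) (transpose a b y)" if "x \<in> V" "y \<in> V" for x y
    by (cases "x = a"; cases "x = b"; cases "y = a"; cases "y = b";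
        simp only: transpose_def if_True if_False; metis sym irrefl other that)
  then show ?thesis
    unfolding graph_iso_map_def using ab by simp
qed

lemma graph_iso_map_move_to_twin:
  assumes f: "graph_iso_map f V E W F" and tw: "closed_twins W F (f a) b"
    and "\<And>x y. F x y \<longleftrightarrow> F y x" and "\<And>x. \<not> F x x"
  obtains h where "graph_iso_map h V E W F" and "h a = b"
  using graph_iso_map_comp[OF f graph_iso_map_transpose_twins[OF tw assms(3,4)]] that by simp

lemma closed_twins_dominating:
  assumes "a \<in> V" "b \<in> V"
    and "\<And>w. w \<in> V \<Longrightarrow> w \<noteq> a \<Longrightarrow> E a w" and "\<And>w. w \<in> V \<Longrightarrow> w \<noteq> b \<Longrightarrow> E b w"
  shows "closed_twins V E a b"
proof -
  have "w = a \<or> E a w" "w = b \<or> E b w" if "w \<in> V" for w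
    using assms(3,4)[OF that] by blast+
  then show ?thesis unfolding closed_twins_def using assms(1,2) by blast
qed

lemma graph_iso_map_cong:
  assumes "graph_iso_map f V E W F"
    and "\<And>x y. x \<in> V \<Longrightarrow> y \<in> V \<Longrightarrow> E x y \<longleftrightarrow> E' x y"
    and "\<And>x y. x \<in> W \<Longrightarrow> y \<in> W \<Longrightarrow> F x y \<longleftrightarrow> F' x y"
  shows "graph_iso_map f V E' W F'"
proof -
  have "E' x y \<longleftrightarrow> F' (f x) (f y)" if "x \<in> V" "y \<in> V" for x y
    using assms(2)[OF that] assms(3)[OF graph_iso_map_in[OF assms(1)] graph_iso_map_in[OF assms(1)]]
      graph_iso_map_adj[OF assms(1) that] that by simp
  then show ?thesis using graph_iso_map_bij[OF assms(1)] unfolding graph_iso_map_def by blast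
qed

lemma not_dvd_abs_plus_one:
  fixes n :: int
  assumes "2 \<le> \<bar>n\<bar>"
  shows "\<not> n dvd \<bar>n\<bar> + 1" and "\<not> (\<bar>n\<bar> + 1) dvd n"
proof
  assume "n dvd \<bar>n\<bar> + 1"
  then have "n dvd 1" by (simp add: dvd_add_right_iff)
  then show False using assms by simp
next
  show "\<not> (\<bar>n\<bar> + 1) dvd n"
  proof
    assume "(\<bar>n\<bar> + 1) dvd n"
    then have "\<bar>\<bar>n\<bar> + 1\<bar> \<le> \<bar>n\<bar>" using assms by (intro dvd_imp_le_int) auto
    then show False by simp
  qed
qed

lemma coprime_if_cong_mult_cancel:
  fixes q n :: int
  assumes "n \<noteq> 0" and cancel: "\<And>m. [q * m = 0] (mod n) \<Longrightarrow> [m = 0] (mod n)"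
  shows "coprime q n"
proof -
  define d where "d = gcd q n"
  have d: "d dvd q" "d dvd n" "0 < d" using assms(1) unfolding d_def by auto
  have "q * (n div d) = (q div d) * n" using d(1,2) by (auto elim!: dvdE)
  then have "n dvd n div d" using cancel[of "n div d"] by (simp add: cong_0_iff)
  moreover have "n div d \<noteq> 0" using d(2,3) assms(1) by (auto elim!: dvdE)
  ultimately have "\<bar>n\<bar> \<le> \<bar>n div d\<bar>" by (rule dvd_imp_le_int[rotated])
  then have "d = 1" using d assms(1) by (auto elim!: dvdE simp: abs_mult)
  then show ?thesis unfolding d_def by (simp add: coprime_iff_gcd_eq_1)
qed

lemma exists_unit_not_cong_pm1:
  fixes n :: int
  assumes n: "7 \<le> n"
  shows "\<exists>k. coprime k n \<and> \<not> [k = 1] (mod n) \<and> \<not> [k = -1] (mod n)"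
proof -
  have not_cong: "\<not> [a = b] (mod n)" if "0 < a - b" "a - b < n" for a b
    using that zdvd_not_zless by (simp add: cong_iff_dvd_diff)
  show ?thesis
  proof (cases "odd n")
    case True
    then have "coprime 2 n" by simp
    then show ?thesis using not_cong[of 2 1] not_cong[of 2 "-1"] n by force
  next
    case False
    then obtain m where m: "n = 2 * m" by blast
    show ?thesis
    proof (cases "odd m")
      case True
      have "[m + 2 = 2] (mod m)" by (simp add: cong_iff_dvd_diff)
      then have "coprime (m + 2) m" using True by (simp add: coprime_cong_cong_left)
      moreover have "coprime (m + 2) 2" using True by simp
      ultimately have "coprime (m + 2) n" unfolding m by simp
      moreover have "5 \<le> m" using n m True by presburger
      ultimately show ?thesis
        using not_cong[of "m + 2" 1] not_cong[of "m + 2" "-1"] m by (intro exI[of _ "m + 2"]) auto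
    next
      case False
      then obtain t where t: "m = 2 * t" by blast
      have "(m - 1) * (m - 1) - 1 = n * (t - 1)" using m t by (simp add: algebra_simps)
      then have "[(m - 1) * (m - 1) = 1] (mod n)" by (simp add: cong_iff_dvd_diff)
      then have "coprime (m - 1) n" using coprime_iff_invertible_int by blast
      then show ?thesis
        using not_cong[of "m - 1" 1] not_cong[of "m - 1" "-1"] m t n by (intro exI[of _ "m - 1"]) auto
    qed
  qed
qed

lemma subloopD:
  assumes "subloop G S"
  shows subloop_subset: "S \<subseteq> carrier G"
    and subloop_one: "\<one>\<^bsub>G\<^esub> \<in> S"
    and subloop_mult: "a \<in> S \<Longrightarrow> b \<in> S \<Longrightarrow> a \<otimes>\<^bsub>G\<^esub> b \<in> S"
    and subloop_left_div: "a \<in> S \<Longrightarrow> b \<in> S \<Longrightarrow> x \<in> carrier G \<Longrightarrow> a \<otimes>\<^bsub>G\<^esub> x = b \<Longrightarrow> x \<in> S"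
    and subloop_right_div: "a \<in> S \<Longrightarrow> b \<in> S \<Longrightarrow> x \<in> carrier G \<Longrightarrow> x \<otimes>\<^bsub>G\<^esub> a = b \<Longrightarrow> x \<in> S"
  using assms unfolding subloop_def by blast+

lemma subloop_carrier: "loop G \<Longrightarrow> subloop G (carrier G)"
  unfolding loop_def subloop_def by auto

lemma subloop_Inter:
  assumes "\<F> \<noteq> {}" and sub: "\<And>S. S \<in> \<F> \<Longrightarrow> subloop G S"
  shows "subloop G (\<Inter>\<F>)"
  unfolding subloop_def
proof (intro conjI ballI impI)
  show "\<Inter>\<F> \<subseteq> carrier G" using assms subloop_subset by blast
  show "\<one>\<^bsub>G\<^esub> \<in> \<Inter>\<F>" using sub subloop_one by blast
  show "a \<otimes>\<^bsub>G\<^esub> b \<in> \<Inter>\<F>" if "a \<in> \<Inter>\<F>" "b \<in> \<Inter>\<F>" for a b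
  proof
    fix S assume "S \<in> \<F>"
    with that show "a \<otimes>\<^bsub>G\<^esub> b \<in> S" by (blast intro: subloop_mult[OF sub])
  qed
  show "x \<in> \<Inter>\<F>" if "a \<in> \<Inter>\<F>" "b \<in> \<Inter>\<F>" "x \<in> carrier G" "a \<otimes>\<^bsub>G\<^esub> x = b" for a b x
  proof
    fix S assume "S \<in> \<F>"
    with that show "x \<in> S" by (blast intro: subloop_left_div[OF sub])
  qed
  show "x \<in> \<Inter>\<F>" if "a \<in> \<Inter>\<F>" "b \<in> \<Inter>\<F>" "x \<in> carrier G" "x \<otimes>\<^bsub>G\<^esub> a = b" for a b x
  proof
    fix S assume "S \<in> \<F>"
    with that show "x \<in> S" by (blast intro: subloop_right_div[OF sub])
  qed
qed

lemma subloop_loop_gen: "loop G \<Longrightarrow> x \<in> carrier G \<Longrightarrow> subloop G (loop_gen G x)"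
  unfolding loop_gen_def by (rule subloop_Inter) (use subloop_carrier in blast)+

lemma mem_loop_gen: "x \<in> carrier G \<Longrightarrow> x \<in> loop_gen G x"
  unfolding loop_gen_def by blast

lemma loop_gen_least: "subloop G S \<Longrightarrow> x \<in> S \<Longrightarrow> loop_gen G x \<subseteq> S"
  unfolding loop_gen_def by blast

lemma power_adj_sym: "power_adj G x y \<longleftrightarrow> power_adj G y x"
  unfolding power_adj_def by auto

lemma power_adj_irrefl: "\<not> power_adj G x x"
  unfolding power_adj_def by simp

lemma power_adj_pm_sym: "power_adj_pm G x y \<longleftrightarrow> power_adj_pm G y x"
  unfolding power_adj_pm_def by auto

lemma power_adj_pm_irrefl: "\<not> power_adj_pm G x x"
  unfolding power_adj_pm_def by simp

locale pa_loop =
  fixes G :: "('a, 'b) monoid_scheme" (structure)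
  assumes power_assoc: "power_assoc_loop G"
begin

abbreviation gen_group :: "'a \<Rightarrow> ('a, 'b) monoid_scheme" where
  "gen_group x \<equiv> G\<lparr>carrier := loop_gen G x\<rparr>"

lemma loop: "loop G"
  using power_assoc unfolding power_assoc_loop_def by blast

lemma one_closed [simp]: "\<one> \<in> carrier G"
  using loop unfolding loop_def by blast

lemma loop_gen_subset: "x \<in> carrier G \<Longrightarrow> loop_gen G x \<subseteq> carrier G"
  using subloop_subset[OF subloop_loop_gen[OF loop]] .

lemma group_gen_group: "x \<in> carrier G \<Longrightarrow> group (gen_group x)"
  using power_assoc unfolding power_assoc_loop_def by blast

lemma subgroup_loop_gen:
  assumes x: "x \<in> carrier G" and y: "y \<in> loop_gen G x"
  shows "subgroup (loop_gen G y) (gen_group x)"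
proof -
  interpret K: group "gen_group x" using group_gen_group[OF x] .
  have "y \<in> carrier G" using y loop_gen_subset[OF x] by blast
  then have sub: "subloop G (loop_gen G y)" using subloop_loop_gen[OF loop] by blast
  have le: "loop_gen G y \<subseteq> loop_gen G x"
    using loop_gen_least[OF subloop_loop_gen[OF loop x] y] .
  show ?thesis
  proof
    show "loop_gen G y \<subseteq> carrier (gen_group x)" using le by simp
    show "a \<otimes>\<^bsub>gen_group x\<^esub> b \<in> loop_gen G y" if "a \<in> loop_gen G y" "b \<in> loop_gen G y" for a b
      using subloop_mult[OF sub that] by simp
    show "\<one>\<^bsub>gen_group x\<^esub> \<in> loop_gen G y" using subloop_one[OF sub] by simp
    show "inv\<^bsub>gen_group x\<^esub> a \<in> loop_gen G y" if a: "a \<in> loop_gen G y" for a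
    proof -
      have aK: "a \<in> carrier (gen_group x)" using a le by auto
      have "a \<otimes> inv\<^bsub>gen_group x\<^esub> a = \<one>" using K.r_inv[OF aK] by simp
      moreover have "inv\<^bsub>gen_group x\<^esub> a \<in> carrier G" using K.inv_closed[OF aK] loop_gen_subset[OF x] by auto
      ultimately show ?thesis using subloop_left_div[OF sub a subloop_one[OF sub]] by blast
    qed
  qed
qed

lemma lpow_gen_group:
  assumes x: "x \<in> carrier G" and y: "y \<in> loop_gen G x"
  shows "lpow G y n = y [^]\<^bsub>gen_group x\<^esub> n"
proof -
  interpret group "gen_group x" using group_gen_group[OF x] .
  have "y \<in> loop_gen G y" using y loop_gen_subset[OF x] by (blast intro: mem_loop_gen)
  then show ?thesis
    unfolding lpow_def using int_pow_consistent[OF subgroup_loop_gen[OF x y]] by simp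
qed

lemma lpow_mem_loop_gen: "x \<in> carrier G \<Longrightarrow> lpow G x n \<in> loop_gen G x"
proof -
  assume x: "x \<in> carrier G"
  interpret K: group "gen_group x" using group_gen_group[OF x] .
  have "x [^]\<^bsub>gen_group x\<^esub> n \<in> carrier (gen_group x)"
    using mem_loop_gen[OF x] by (intro K.int_pow_closed) simp
  then show ?thesis unfolding lpow_def by simp
qed

lemma lpow_closed [simp]: "x \<in> carrier G \<Longrightarrow> lpow G x n \<in> carrier G"
  using lpow_mem_loop_gen loop_gen_subset by blast

lemma lpow_lpow: "x \<in> carrier G \<Longrightarrow> lpow G (lpow G x n) m = lpow G x (n * m)"
proof -
  assume x: "x \<in> carrier G"
  interpret K: group "gen_group x" using group_gen_group[OF x] .
  have "x \<in> carrier (gen_group x)" using mem_loop_gen[OF x] by simp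
  then have "(x [^]\<^bsub>gen_group x\<^esub> n) [^]\<^bsub>gen_group x\<^esub> m = x [^]\<^bsub>gen_group x\<^esub> (n * m)"
    by (rule K.int_pow_pow)
  then show ?thesis
    using lpow_gen_group[OF x lpow_mem_loop_gen[OF x]] unfolding lpow_def by simp
qed

lemma lpow_0 [simp]: "lpow G x 0 = \<one>"
  unfolding lpow_def by simp

lemma lpow_1 [simp]: "x \<in> carrier G \<Longrightarrow> lpow G x 1 = x"
proof -
  assume x: "x \<in> carrier G"
  interpret K: group "gen_group x" using group_gen_group[OF x] .
  show ?thesis unfolding lpow_def using K.int_pow_1 mem_loop_gen[OF x] by simp
qed

lemma lpow_of_one [simp]: "lpow G \<one> n = \<one>"
  using lpow_lpow[of \<one> 0 n] by simp

definition loop_ord :: "'a \<Rightarrow> nat" where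
  "loop_ord x = group.ord (gen_group x) x"

lemma lpow_eq_iff:
  "x \<in> carrier G \<Longrightarrow> lpow G x a = lpow G x b \<longleftrightarrow> [a = b] (mod int (loop_ord x))"
proof -
  assume x: "x \<in> carrier G"
  interpret K: group "gen_group x" using group_gen_group[OF x] .
  have "x [^]\<^bsub>gen_group x\<^esub> a = x [^]\<^bsub>gen_group x\<^esub> b \<longleftrightarrow> int (K.ord x) dvd b - a"
    using mem_loop_gen[OF x] by (intro K.int_pow_eq) simp
  then show ?thesis
    unfolding lpow_def loop_ord_def by (simp add: cong_iff_dvd_diff dvd_diff_commute)
qed

lemma lpow_eq_one_iff:
  "x \<in> carrier G \<Longrightarrow> lpow G x a = \<one> \<longleftrightarrow> [a = 0] (mod int (loop_ord x))"
  using lpow_eq_iff[of x a 0] by simp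

definition torsion :: "'a \<Rightarrow> bool" where
  "torsion x \<longleftrightarrow> (\<exists>n::int. n \<noteq> 0 \<and> lpow G x n = \<one>)"

lemma torsion_iff_loop_ord: "x \<in> carrier G \<Longrightarrow> torsion x \<longleftrightarrow> loop_ord x \<noteq> 0"
  unfolding torsion_def lpow_eq_one_iff
  by (cases "loop_ord x = 0") (auto simp: cong_0_iff intro!: exI[of _ "int (loop_ord x)"])

lemma torsion_one: "torsion \<one>"
  unfolding torsion_def by (intro exI[of _ 1]) simp

lemma lpow_inj_nontorsion: "x \<in> carrier G \<Longrightarrow> \<not> torsion x \<Longrightarrow> lpow G x a = lpow G x b \<longleftrightarrow> a = b"
  using lpow_eq_iff torsion_iff_loop_ord by simp

lemma torsion_lpow_iff:
  assumes x: "x \<in> carrier G" and n: "n \<noteq> 0"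
  shows "torsion (lpow G x n) \<longleftrightarrow> torsion x"
proof
  assume "torsion (lpow G x n)"
  then obtain k where "k \<noteq> 0" "lpow G x (n * k) = \<one>"
    unfolding torsion_def using lpow_lpow[OF x] by auto
  then show "torsion x" unfolding torsion_def using n by (intro exI[of _ "n * k"]) simp
next
  assume "torsion x"
  then obtain k where k: "k \<noteq> 0" "lpow G x k = \<one>" unfolding torsion_def by blast
  have "lpow G (lpow G x n) k = lpow G (lpow G x k) n"
    using lpow_lpow[OF x] by (simp add: mult.commute)
  then show "torsion (lpow G x n)" unfolding torsion_def using k by auto
qed

lemma power_adj_pm_torsion_iff:
  assumes "x \<in> carrier G" "y \<in> carrier G" "power_adj_pm G x y"
  shows "torsion x \<longleftrightarrow> torsion y"
  using assms torsion_lpow_iff unfolding power_adj_pm_def by metis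

lemma power_adj_pm_one_iff: "y \<in> carrier G \<Longrightarrow> power_adj_pm G \<one> y \<longleftrightarrow> y \<noteq> \<one> \<and> torsion y"
  unfolding power_adj_pm_def torsion_def by auto

lemma closed_nbhd_one_iff_torsion: "y \<in> carrier G \<Longrightarrow> y = \<one> \<or> power_adj_pm G \<one> y \<longleftrightarrow> torsion y"
  using power_adj_pm_one_iff torsion_one by auto

lemma power_adj_iff_power_adj_pm:
  "power_adj G x y \<longleftrightarrow> x \<noteq> y \<and> (power_adj_pm G x y \<or> x = \<one> \<or> y = \<one>)"
proof -
  have "(\<exists>n. y = lpow G x n) \<longleftrightarrow> y = \<one> \<or> (\<exists>n. n \<noteq> 0 \<and> y = lpow G x n)" for x y
    by (metis lpow_0)
  then show ?thesis unfolding power_adj_def power_adj_pm_def by blast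
qed

lemma loop_ord_lpow_dvd:
  assumes x: "x \<in> carrier G"
  shows "loop_ord (lpow G x q) dvd loop_ord x"
proof -
  have "lpow G (lpow G x q) (int (loop_ord x)) = \<one>"
    using lpow_lpow[OF x] lpow_eq_one_iff[OF x] by (simp add: cong_0_iff)
  then show ?thesis using lpow_eq_one_iff[OF lpow_closed[OF x]] by (simp add: cong_0_iff)
qed

lemma lpow_generates_if_loop_ord_eq:
  assumes x: "x \<in> carrier G" and eq: "loop_ord (lpow G x q) = loop_ord x" and n: "loop_ord x \<noteq> 0"
  shows "\<exists>s. lpow G (lpow G x q) s = x"
proof -
  have "coprime q (int (loop_ord x))"
  proof (rule coprime_if_cong_mult_cancel)
    fix m assume "[q * m = 0] (mod int (loop_ord x))"
    then have "lpow G (lpow G x q) m = \<one>" using lpow_lpow[OF x] lpow_eq_one_iff[OF x] by simp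
    then show "[m = 0] (mod int (loop_ord x))" using lpow_eq_one_iff[OF lpow_closed[OF x]] eq by simp
  qed (use n in simp)
  then obtain s where "[q * s = 1] (mod int (loop_ord x))" using cong_solve_coprime_int by blast
  then have "lpow G (lpow G x q) s = lpow G x 1" using lpow_lpow[OF x] lpow_eq_iff[OF x] by simp
  then show ?thesis using x by auto
qed

lemma loop_ord_lpow_le_half:
  assumes x: "x \<in> carrier G" "torsion x" and ngen: "\<nexists>s. x = lpow G (lpow G x q) s"
  shows "2 * loop_ord (lpow G x q) \<le> loop_ord x"
proof -
  obtain c where c: "loop_ord x = loop_ord (lpow G x q) * c"
    using loop_ord_lpow_dvd[OF x(1)] by blast
  have "loop_ord x \<noteq> 0" using torsion_iff_loop_ord x by blast
  moreover have "loop_ord (lpow G x q) \<noteq> loop_ord x"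
    using lpow_generates_if_loop_ord_eq[OF x(1)] ngen calculation by metis
  ultimately have "c \<noteq> 0" "c \<noteq> 1" using c by auto
  then show ?thesis using c by (simp add: mult.commute[of _ c])
qed

lemma chain_loop_ord_ge_8:
  assumes xyz: "x \<in> carrier G" "y \<in> carrier G" "z \<in> carrier G" and x1: "x \<noteq> \<one>"
    and tz: "torsion z" and xy: "x = lpow G y p" and yz: "y = lpow G z q"
    and nyx: "\<nexists>s. y = lpow G x s" and nzy: "\<nexists>s. z = lpow G y s"
  shows "8 \<le> loop_ord z"
proof -
  have oy: "2 * loop_ord y \<le> loop_ord z" using loop_ord_lpow_le_half[OF xyz(3) tz] nzy yz by blast
  have "loop_ord z \<noteq> 0" using tz xyz torsion_iff_loop_ord by blast
  moreover have "loop_ord y dvd loop_ord z" using loop_ord_lpow_dvd[OF xyz(3)] yz by simp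
  ultimately have "loop_ord y \<noteq> 0" by auto
  then have ty: "torsion y" using torsion_iff_loop_ord xyz(2) by blast
  have ox: "2 * loop_ord x \<le> loop_ord y" using loop_ord_lpow_le_half[OF xyz(2) ty] nyx xy by blast
  have "loop_ord x dvd loop_ord y" using loop_ord_lpow_dvd[OF xyz(2)] xy by simp
  with \<open>loop_ord y \<noteq> 0\<close> have "loop_ord x \<noteq> 0" by auto
  moreover have "loop_ord x \<noteq> 1" using lpow_eq_one_iff[OF xyz(1), of 1] x1 xyz(1) by auto
  ultimately show ?thesis using ox oy by linarith
qed

lemma power_adj_iff_pm_off_one:
  "x \<noteq> \<one> \<Longrightarrow> y \<noteq> \<one> \<Longrightarrow> power_adj G x y \<longleftrightarrow> power_adj_pm G x y"
  using power_adj_iff_power_adj_pm[of x y] power_adj_pm_irrefl[of G x] by auto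

lemma nontorsion_adj_inverse:
  assumes x: "x \<in> carrier G" "\<not> torsion x"
  shows "power_adj_pm G x (lpow G x (-1))" and "\<not> torsion (lpow G x (-1))"
proof -
  have "x \<noteq> lpow G x (-1)" using lpow_inj_nontorsion[OF x, of 1 "-1"] x(1) by simp
  then show "power_adj_pm G x (lpow G x (-1))"
    unfolding power_adj_pm_def by (intro conjI disjI1 exI[of _ "-1"]) simp_all
  show "\<not> torsion (lpow G x (-1))" using torsion_lpow_iff[OF x(1)] x(2) by simp
qed

end

locale pa_loop_vertices = pa_loop +
  fixes S :: "'a set"
  assumes S_subset: "S \<subseteq> carrier G"
    and nonidentity_in_S: "carrier G - {\<one>} \<subseteq> S"
begin

lemma mem_S: "x \<in> carrier G \<Longrightarrow> x \<noteq> \<one> \<Longrightarrow> x \<in> S"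
  using nonidentity_in_S by blast

lemma mutual_powers_closed_twins:
  assumes x: "x \<in> S" "x \<noteq> \<one>" and y: "y \<in> S" "y \<noteq> \<one>"
    and xy: "x = lpow G y i" and yx: "y = lpow G x j"
  shows "closed_twins S (power_adj_pm G) x y"
proof -
  have half: "w = b \<or> power_adj_pm G b w"
    if ab: "a \<in> carrier G" "b \<in> carrier G" "a \<noteq> \<one>" "b \<noteq> \<one>" "a = lpow G b i" "b = lpow G a j"
      and w: "w \<in> carrier G" "w = a \<or> power_adj_pm G a w" for a b i j w
  proof -
    have i: "i \<noteq> 0" using ab(3,5) by auto
    have j: "j \<noteq> 0" using ab(4,6) by auto
    have "\<exists>k. k \<noteq> 0 \<and> (w = lpow G b k \<or> b = lpow G w k)"
      using w(2)
    proof
      assume "w = a"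
      then show ?thesis using ab(5) i by blast
    next
      assume "power_adj_pm G a w"
      then obtain k where k: "k \<noteq> 0" "w = lpow G a k \<or> a = lpow G w k"
        unfolding power_adj_pm_def by blast
      from k(2) show ?thesis
      proof
        assume "w = lpow G a k"
        then have "w = lpow G b (i * k)" using ab(2,5) lpow_lpow by simp
        then show ?thesis using i k(1) by (intro exI[of _ "i * k"]) simp
      next
        assume "a = lpow G w k"
        then have "b = lpow G w (k * j)" using ab(6) w(1) lpow_lpow by simp
        then show ?thesis using j k(1) by (intro exI[of _ "k * j"]) simp
      qed
    qed
    then show ?thesis unfolding power_adj_pm_def by blast
  qed
  have xc: "x \<in> carrier G" and yc: "y \<in> carrier G" using x(1) y(1) S_subset by blast+
  show ?thesis
    unfolding closed_twins_def
  proof (intro conjI ballI)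
    fix w assume "w \<in> S"
    then have "w \<in> carrier G" using S_subset by blast
    then show "w = x \<or> power_adj_pm G x w \<longleftrightarrow> w = y \<or> power_adj_pm G y w"
      using half[OF xc yc x(2) y(2) xy yx] half[OF yc xc y(2) x(2) yx xy] by blast
  qed (use x y in blast)+
qed

lemma nontorsion_twin_exponent:
  assumes z: "z \<in> carrier G" "\<not> torsion z" and tw: "closed_twins S (power_adj_pm G) z (lpow G z n)"
  shows "n = 1 \<or> n = -1"
proof (rule ccontr)
  assume n: "\<not> (n = 1 \<or> n = -1)"
  have nbhd: "v = z \<or> power_adj_pm G z v \<longleftrightarrow> v = lpow G z n \<or> power_adj_pm G (lpow G z n) v"
    if "v \<in> S" for v
    using tw that unfolding closed_twins_def by blast
  have pow_in_S: "lpow G z m \<in> S" if "m \<noteq> 0" for m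
    using torsion_lpow_iff[OF z(1) that] z torsion_one by (metis mem_S lpow_closed)
  show False
  proof (cases "n = 0")
    case True
    have "z \<noteq> \<one>" using z(2) torsion_one by blast
    with True have "power_adj_pm G \<one> z"
      using nbhd[of z] pow_in_S[of 1] z(1) power_adj_pm_sym by auto
    then show False using power_adj_pm_one_iff[OF z(1)] z(2) by blast
  next
    case False
    then have n2: "2 \<le> \<bar>n\<bar>" using n by linarith
    define m where "m = \<bar>n\<bar> + 1"
    have m: "m \<noteq> 0" "m \<noteq> 1" "m \<noteq> n" using n2 unfolding m_def by auto
    have "power_adj_pm G z (lpow G z m)"
      using lpow_inj_nontorsion[OF z, of 1 m] m z(1) unfolding power_adj_pm_def by auto
    then have "lpow G z m = lpow G z n \<or> power_adj_pm G (lpow G z n) (lpow G z m)"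
      using nbhd[OF pow_in_S[OF m(1)]] by blast
    moreover have "lpow G z m \<noteq> lpow G z n" using lpow_inj_nontorsion[OF z] m(3) by simp
    ultimately obtain k where "lpow G z m = lpow G z (n * k) \<or> lpow G z n = lpow G z (m * k)"
      unfolding power_adj_pm_def using lpow_lpow[OF z(1)] by auto
    then have "n dvd m \<or> m dvd n" using lpow_inj_nontorsion[OF z] by auto
    then show False using not_dvd_abs_plus_one[OF n2] unfolding m_def by blast
  qed
qed

lemma nontorsion_closed_twins:
  assumes z: "z \<in> carrier G" "\<not> torsion z" and tw: "closed_twins S (power_adj_pm G) z w"
  shows "w = z \<or> w = lpow G z (-1)"
proof -
  have w: "w \<in> carrier G" using tw S_subset unfolding closed_twins_def by blast
  have "w = z \<or> power_adj_pm G z w" using tw unfolding closed_twins_def by blast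
  then show ?thesis
  proof
    assume "power_adj_pm G z w"
    then obtain n where n: "n \<noteq> 0" "w = lpow G z n \<or> z = lpow G w n"
      unfolding power_adj_pm_def by blast
    from n(2) show ?thesis
    proof
      assume "w = lpow G z n"
      moreover have "n = 1 \<or> n = -1" using nontorsion_twin_exponent[OF z] tw calculation by blast
      ultimately show ?thesis using z(1) by auto
    next
      assume zw: "z = lpow G w n"
      then have "\<not> torsion w" using torsion_lpow_iff[OF w n(1)] z(2) by simp
      then have "n = 1 \<or> n = -1"
        using nontorsion_twin_exponent[OF w] closed_twins_sym[OF tw] zw by blast
      then show ?thesis using zw lpow_lpow[OF w, of "-1" "-1"] w by auto
    qed
  qed simp
qed

lemma nontorsion_rigid_clique:
  assumes z: "z \<in> carrier G" "\<not> torsion z"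
    and A: "A \<subseteq> {0<..}" and chain: "\<And>a b. a \<in> A \<Longrightarrow> b \<in> A \<Longrightarrow> a dvd b \<or> b dvd a"
  shows "rigid_clique S (power_adj_pm G) (lpow G z ` A)"
proof -
  have nonzero: "a \<noteq> 0" if "a \<in> A" for a
    using A that by auto
  have nontorsion: "\<not> torsion (lpow G z a)" if "a \<in> A" for a
    using torsion_lpow_iff[OF z(1) nonzero[OF that]] z(2) by blast
  have in_S: "lpow G z a \<in> S" if "a \<in> A" for a
  proof -
    have "lpow G z a \<noteq> \<one>" using nontorsion[OF that] torsion_one by auto
    then show ?thesis using mem_S z(1) by simp
  qed
  have adj: "power_adj_pm G (lpow G z a) (lpow G z b)"
    if ab: "a \<in> A" "b \<in> A" "a dvd b" "a \<noteq> b" for a b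
  proof -
    obtain c where "b = a * c" using ab(3) by blast
    then have "lpow G z b = lpow G (lpow G z a) c" "c \<noteq> 0"
      using lpow_lpow[OF z(1)] nonzero[OF ab(2)] by auto
    moreover have "lpow G z a \<noteq> lpow G z b" using lpow_inj_nontorsion[OF z] ab(4) by simp
    ultimately show ?thesis unfolding power_adj_pm_def by blast
  qed
  have not_twins: "\<not> closed_twins S (power_adj_pm G) (lpow G z a) (lpow G z b)"
    if "a \<in> A" "b \<in> A" "a \<noteq> b" for a b
  proof
    assume "closed_twins S (power_adj_pm G) (lpow G z a) (lpow G z b)"
    then have "lpow G z b = lpow G z a \<or> lpow G z b = lpow G z (a * -1)"
      using nontorsion_closed_twins[OF lpow_closed[OF z(1)] nontorsion[OF that(1)]]
        lpow_lpow[OF z(1)] by simp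
    then have "b = a \<or> b = - a" using lpow_inj_nontorsion[OF z] by simp
    moreover have "0 < a" "0 < b" using A that(1,2) by auto
    ultimately show False using that(3) by linarith
  qed
  have one_twin: "at_most_one_twin S (power_adj_pm G) (lpow G z a)" if "a \<in> A" for a
    using nontorsion_closed_twins[OF lpow_closed[OF z(1)] nontorsion[OF that]]
    unfolding at_most_one_twin_def by blast
  have clique: "power_adj_pm G u v \<and> \<not> closed_twins S (power_adj_pm G) u v"
    if uv: "u \<in> lpow G z ` A" "v \<in> lpow G z ` A" "u \<noteq> v" for u v
  proof -
    obtain a b where ab: "a \<in> A" "b \<in> A" "u = lpow G z a" "v = lpow G z b" "a \<noteq> b"
      using uv by blast
    then show ?thesis
      using chain[OF ab(1,2)] adj[OF ab(1,2)] adj[OF ab(2,1)] power_adj_pm_sym[of G u v]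
        not_twins[OF ab(1,2,5)] by blast
  qed
  show ?thesis
    unfolding rigid_clique_def using clique in_S one_twin by (auto simp: image_subset_iff)
qed

lemma nontorsion_in_rigid_4clique:
  assumes z: "z \<in> carrier G" "\<not> torsion z"
  shows "in_rigid_4clique S (power_adj_pm G) z"
  unfolding in_rigid_4clique_def
proof (intro exI conjI)
  let ?A = "{1, 2, 4, 8 :: int}"
  have "z = lpow G z 1" using z(1) by simp
  then show "z \<in> lpow G z ` ?A" by blast
  have "inj_on (lpow G z) ?A" using lpow_inj_nontorsion[OF z] by (simp add: inj_on_def)
  then show "card (lpow G z ` ?A) = 4" by (simp add: card_image)
  have "?A \<subseteq> {0<..}" by auto
  moreover have "a dvd b \<or> b dvd a" if "a \<in> ?A" "b \<in> ?A" for a b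
    using that by auto
  ultimately show "rigid_clique S (power_adj_pm G) (lpow G z ` ?A)"
    by (rule nontorsion_rigid_clique[OF z])
qed

lemma torsion_not_at_most_one_twin:
  assumes z: "z \<in> carrier G" and ord: "7 \<le> loop_ord z"
  shows "\<not> at_most_one_twin S (power_adj_pm G) z"
proof -
  define n where "n = int (loop_ord z)"
  have n: "7 \<le> n" using ord unfolding n_def by simp
  have cong_iff: "lpow G z a = lpow G z b \<longleftrightarrow> [a = b] (mod n)" for a b
    using lpow_eq_iff[OF z] unfolding n_def .
  obtain k where k: "coprime k n" "\<not> [k = 1] (mod n)" "\<not> [k = -1] (mod n)"
    using exists_unit_not_cong_pm1[OF n] by blast
  obtain s where s: "[k * s = 1] (mod n)" using cong_solve_coprime_int[OF k(1)] by blast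
  have not_cong: "\<not> [a = b] (mod n)" if "0 < a - b" "a - b < n" for a b
    using that zdvd_not_zless by (simp add: cong_iff_dvd_diff)
  have z1: "z \<noteq> \<one>"
    using cong_iff[of 1 0] not_cong[of 1 0] n z by simp
  have zS: "z \<in> S" using mem_S z z1 by blast
  have twin: "closed_twins S (power_adj_pm G) z w"
    if zw: "z = lpow G w t" and wz: "w = lpow G z r" for w t r
  proof -
    have w1: "w \<noteq> \<one>"
    proof
      assume "w = \<one>"
      then show False using zw z1 by simp
    qed
    moreover have "w \<in> carrier G" using wz z by simp
    ultimately have "w \<in> S" using mem_S by blast
    then show ?thesis by (rule mutual_powers_closed_twins[OF zS z1 _ w1 zw wz])
  qed
  have "z = lpow G (lpow G z (-1)) (-1)" using lpow_lpow[OF z] z by simp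
  then have twin_inv: "closed_twins S (power_adj_pm G) z (lpow G z (-1))" by (rule twin) simp
  have "lpow G (lpow G z k) s = lpow G z 1"
    using lpow_lpow[OF z] cong_iff s by simp
  then have twin_k: "closed_twins S (power_adj_pm G) z (lpow G z k)"
    using z by (intro twin[of _ s k]) simp_all
  have "lpow G z (-1) \<noteq> z" "lpow G z k \<noteq> z" "lpow G z (-1) \<noteq> lpow G z k"
    using cong_iff[of "-1" 1] cong_iff[of k 1] cong_iff[of "-1" k] not_cong[of 1 "-1"] n k(2,3) z
    by (auto simp: cong_sym_eq)
  then show ?thesis
    using twin_inv twin_k unfolding at_most_one_twin_def by blast
qed

lemma torsion_chain_not_at_most_one_twin:
  assumes "x \<in> carrier G" "y \<in> carrier G" "z \<in> carrier G" "x \<noteq> \<one>" "torsion z"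
    and "x = lpow G y p" "y = lpow G z q" "\<nexists>s. y = lpow G x s" "\<nexists>s. z = lpow G y s"
  shows "\<not> at_most_one_twin S (power_adj_pm G) z"
  using torsion_not_at_most_one_twin[OF assms(3)] chain_loop_ord_ge_8[OF assms] by simp

lemma torsion_no_rigid_triangle:
  assumes abc: "a \<in> S" "b \<in> S" "c \<in> S" "a \<noteq> \<one>" "b \<noteq> \<one>" "c \<noteq> \<one>"
    and distinct: "a \<noteq> b" "b \<noteq> c" "a \<noteq> c" and ta: "torsion a"
    and clique: "rigid_clique S (power_adj_pm G) {a, b, c}"
  shows False
proof -
  define le where "le u v \<longleftrightarrow> (\<exists>s. u = lpow G v s)" for u v
  have in_carrier: "u \<in> carrier G" if "u \<in> {a, b, c}" for u using that abc S_subset by blast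
  have adj: "power_adj_pm G u v" if "u \<in> {a, b, c}" "v \<in> {a, b, c}" "u \<noteq> v" for u v
    using clique that unfolding rigid_clique_def by blast
  have torsion: "torsion u" if "u \<in> {a, b, c}" for u
    using that ta adj in_carrier power_adj_pm_torsion_iff by (metis insert_iff)
  have comparable: "le u v \<or> le v u" if "u \<in> {a, b, c}" "v \<in> {a, b, c}" "u \<noteq> v" for u v
    using adj[OF that] unfolding power_adj_pm_def le_def by blast
  have not_mutual: "\<not> (le u v \<and> le v u)" if uv: "u \<in> {a, b, c}" "v \<in> {a, b, c}" "u \<noteq> v" for u v
  proof
    assume "le u v \<and> le v u"
    then obtain i j where "u = lpow G v i" "v = lpow G u j" unfolding le_def by blast
    moreover have "u \<in> S" "u \<noteq> \<one>" "v \<in> S" "v \<noteq> \<one>" using uv abc by auto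
    ultimately have "closed_twins S (power_adj_pm G) u v"
      using mutual_powers_closed_twins by blast
    then show False using clique uv unfolding rigid_clique_def by blast
  qed
  have trans: "le u w" if uvw: "w \<in> {a, b, c}" "le u v" "le v w" for u v w
  proof -
    obtain i j where "u = lpow G v i" "v = lpow G w j" using uvw(2,3) unfolding le_def by blast
    then have "u = lpow G w (j * i)" using lpow_lpow in_carrier[OF uvw(1)] by simp
    then show ?thesis unfolding le_def by blast
  qed
  have no_chain: "\<not> (le u v \<and> le v w \<and> \<not> le v u \<and> \<not> le w v)"
    if uvw: "u \<in> {a, b, c}" "v \<in> {a, b, c}" "w \<in> {a, b, c}" for u v w
  proof
    assume chain: "le u v \<and> le v w \<and> \<not> le v u \<and> \<not> le w v"
    then obtain p q where p: "u = lpow G v p" and q: "v = lpow G w q" unfolding le_def by blast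
    have strict: "\<nexists>s. v = lpow G u s" "\<nexists>s. w = lpow G v s" using chain unfolding le_def by auto
    have "u \<noteq> \<one>" using uvw(1) abc by auto
    with p q strict have "\<not> at_most_one_twin S (power_adj_pm G) w"
      using torsion_chain_not_at_most_one_twin[OF in_carrier[OF uvw(1)] in_carrier[OF uvw(2)]
          in_carrier[OF uvw(3)] _ torsion[OF uvw(3)]] by blast
    then show False using clique uvw(3) unfolding rigid_clique_def by blast
  qed
  show False
    using comparable[of a b] comparable[of b c] comparable[of a c]
      not_mutual[of a b] not_mutual[of b c] not_mutual[of a c]
      trans[of c a b] trans[of b a c] trans[of c b a] trans[of a b c] trans[of b c a] trans[of a c b]
      no_chain[of a b c] no_chain[of a c b] no_chain[of b a c] no_chain[of b c a]
      no_chain[of c a b] no_chain[of c b a] distinct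
    by blast
qed

lemma torsion_not_in_rigid_4clique:
  assumes x: "x \<in> carrier G" "x \<noteq> \<one>" "torsion x"
  shows "\<not> in_rigid_4clique S (power_adj_pm G) x"
proof
  assume "in_rigid_4clique S (power_adj_pm G) x"
  then obtain X where X: "x \<in> X" "card X = 4" "rigid_clique S (power_adj_pm G) X"
    unfolding in_rigid_4clique_def by blast
  define Y where "Y = X - {x, \<one>}"
  have "finite X" using X(2) by (simp add: card_ge_0_finite)
  have "card X - card {x, \<one>} \<le> card Y" unfolding Y_def by (rule diff_card_le_card_Diff) simp
  moreover have "card {x, \<one>} \<le> 2" by (simp add: card_insert_le_m1)
  ultimately have "2 \<le> card Y" using X(2) by linarith
  then obtain u where u: "u \<in> Y" by fastforce
  have "1 \<le> card (Y - {u})" using \<open>2 \<le> card Y\<close> u by (simp add: card_Diff_singleton_if)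
  then have "Y - {u} \<noteq> {}" by (metis card.empty not_one_le_zero)
  then obtain v where v: "v \<in> Y - {u}" by blast
  have uv: "u \<in> X" "u \<noteq> x" "u \<noteq> \<one>" "v \<in> X" "v \<noteq> x" "v \<noteq> \<one>" "u \<noteq> v"
    using u v unfolding Y_def by auto
  have "{x, u, v} \<subseteq> X" using X(1) uv by blast
  then have clique: "rigid_clique S (power_adj_pm G) {x, u, v}" by (rule rigid_clique_subset[OF X(3)])
  have "X \<subseteq> S" using X(3) unfolding rigid_clique_def by blast
  then show False
    using torsion_no_rigid_triangle[OF _ _ _ x(2) uv(3) uv(6) _ uv(7) _ x(3) clique] X(1) uv
    by blast
qed

lemma torsion_iff_not_in_rigid_4clique:
  "x \<in> carrier G \<Longrightarrow> x \<noteq> \<one> \<Longrightarrow> torsion x \<longleftrightarrow> \<not> in_rigid_4clique S (power_adj_pm G) x"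
  using torsion_not_in_rigid_4clique nontorsion_in_rigid_4clique by blast

end

context pa_loop
begin

lemma pa_loop_vertices_carrier: "pa_loop_vertices G (carrier G)"
  using pa_loop_axioms unfolding pa_loop_vertices_def pa_loop_vertices_axioms_def by blast

lemma pa_loop_vertices_nonidentity: "pa_loop_vertices G (carrier G - {\<one>})"
  using pa_loop_axioms unfolding pa_loop_vertices_def pa_loop_vertices_axioms_def by blast

end

lemma torsion_iso:
  assumes "pa_loop_vertices G S" "pa_loop_vertices H T"
    and f: "graph_iso_map f S (power_adj_pm G) T (power_adj_pm H)"
    and x: "x \<in> S" "x \<noteq> \<one>\<^bsub>G\<^esub>" "f x \<noteq> \<one>\<^bsub>H\<^esub>"
  shows "pa_loop.torsion G x \<longleftrightarrow> pa_loop.torsion H (f x)"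
proof -
  interpret G: pa_loop_vertices G S by fact
  interpret H: pa_loop_vertices H T by fact
  have "x \<in> carrier G" "f x \<in> carrier H"
    using x G.S_subset H.S_subset graph_iso_map_in[OF f] by auto
  then show ?thesis
    using G.torsion_iff_not_in_rigid_4clique H.torsion_iff_not_in_rigid_4clique
      in_rigid_4clique_iso[OF f x(1)] x by simp
qed

lemma graph_iso_maps_fixing_one:
  assumes "pa_loop G" "pa_loop H"
    and h: "bij_betw h (carrier G) (carrier H)" "h \<one>\<^bsub>G\<^esub> = \<one>\<^bsub>H\<^esub>"
    and adj: "\<And>x y. x \<in> carrier G - {\<one>\<^bsub>G\<^esub>} \<Longrightarrow> y \<in> carrier G - {\<one>\<^bsub>G\<^esub>} \<Longrightarrow>
                power_adj_pm G x y \<longleftrightarrow> power_adj_pm H (h x) (h y)"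
    and tor: "\<And>x. x \<in> carrier G \<Longrightarrow> pa_loop.torsion G x \<longleftrightarrow> pa_loop.torsion H (h x)"
  shows "graph_iso_map h (carrier G) (power_adj_pm G) (carrier H) (power_adj_pm H)"
    and "graph_iso_map h (carrier G) (power_adj G) (carrier H) (power_adj H)"
proof -
  interpret G: pa_loop G by fact
  interpret H: pa_loop H by fact
  have hc: "h x \<in> carrier H" if "x \<in> carrier G" for x
    using bij_betw_apply[OF h(1) that] .
  have heq: "h x = h y \<longleftrightarrow> x = y" if "x \<in> carrier G" "y \<in> carrier G" for x y
    using h(1) that unfolding bij_betw_def inj_on_def by blast
  have h_one: "h x = \<one>\<^bsub>H\<^esub> \<longleftrightarrow> x = \<one>\<^bsub>G\<^esub>" if "x \<in> carrier G" for x
    using heq[OF that G.one_closed] h(2) by simp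
  have adj_one: "power_adj_pm G \<one>\<^bsub>G\<^esub> y \<longleftrightarrow> power_adj_pm H \<one>\<^bsub>H\<^esub> (h y)" if "y \<in> carrier G" for y
    using G.power_adj_pm_one_iff[OF that] H.power_adj_pm_one_iff[OF hc[OF that]] h_one[OF that]
      tor[OF that] by simp
  have pm: "power_adj_pm G x y \<longleftrightarrow> power_adj_pm H (h x) (h y)"
    if "x \<in> carrier G" "y \<in> carrier G" for x y
  proof (cases "x = \<one>\<^bsub>G\<^esub> \<or> y = \<one>\<^bsub>G\<^esub>")
    case True
    then show ?thesis
      using adj_one that h(2) power_adj_pm_sym[of G] power_adj_pm_sym[of H] by auto
  qed (use adj that in blast)
  then show "graph_iso_map h (carrier G) (power_adj_pm G) (carrier H) (power_adj_pm H)"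
    unfolding graph_iso_map_def using h(1) by blast
  have "power_adj G x y \<longleftrightarrow> power_adj H (h x) (h y)" if "x \<in> carrier G" "y \<in> carrier G" for x y
    using G.power_adj_iff_power_adj_pm H.power_adj_iff_power_adj_pm pm[OF that] heq[OF that]
      h_one that by auto
  then show "graph_iso_map h (carrier G) (power_adj G) (carrier H) (power_adj H)"
    unfolding graph_iso_map_def using h(1) by blast
qed

lemma power_graph_iso_imp_pm_iso:
  assumes "pa_loop G" "pa_loop H"
    and iso: "graph_iso (carrier G) (power_adj G) (carrier H) (power_adj H)"
  shows "graph_iso (carrier G) (power_adj_pm G) (carrier H) (power_adj_pm H)"
proof -
  interpret G: pa_loop G by fact
  interpret H: pa_loop H by fact
  obtain f where f: "graph_iso_map f (carrier G) (power_adj G) (carrier H) (power_adj H)"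
    using iso graph_iso_iff_map by blast
  have dominating_G: "power_adj G \<one>\<^bsub>G\<^esub> x" if "x \<noteq> \<one>\<^bsub>G\<^esub>" for x
    using that G.power_adj_iff_power_adj_pm by auto
  have dominating_H: "power_adj H \<one>\<^bsub>H\<^esub> y" if "y \<noteq> \<one>\<^bsub>H\<^esub>" for y
    using that H.power_adj_iff_power_adj_pm by auto
  have twins: "closed_twins (carrier H) (power_adj H) (f \<one>\<^bsub>G\<^esub>) \<one>\<^bsub>H\<^esub>"
  proof (rule closed_twins_dominating)
    fix w assume "w \<in> carrier H" "w \<noteq> f \<one>\<^bsub>G\<^esub>"
    then obtain v where "v \<in> carrier G" "w = f v" "v \<noteq> \<one>\<^bsub>G\<^esub>"
      using graph_iso_map_surj[OF f] by blast
    then show "power_adj H (f \<one>\<^bsub>G\<^esub>) w"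
      using dominating_G graph_iso_map_adj[OF f] by simp
  qed (use dominating_H graph_iso_map_in[OF f] in auto)
  obtain h where h: "graph_iso_map h (carrier G) (power_adj G) (carrier H) (power_adj H)"
    and h1: "h \<one>\<^bsub>G\<^esub> = \<one>\<^bsub>H\<^esub>"
    using graph_iso_map_move_to_twin[OF f twins power_adj_sym power_adj_irrefl] by blast
  have "graph_iso_map h (carrier G - {\<one>\<^bsub>G\<^esub>}) (power_adj G) (carrier H - {\<one>\<^bsub>H\<^esub>}) (power_adj H)"
    using graph_iso_map_remove_vertex[OF h G.one_closed] h1 by simp
  then have h_off_one:
    "graph_iso_map h (carrier G - {\<one>\<^bsub>G\<^esub>}) (power_adj_pm G) (carrier H - {\<one>\<^bsub>H\<^esub>}) (power_adj_pm H)"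
    by (rule graph_iso_map_cong) (auto simp: G.power_adj_iff_pm_off_one H.power_adj_iff_pm_off_one)
  have "G.torsion x \<longleftrightarrow> H.torsion (h x)" if x: "x \<in> carrier G" for x
  proof (cases "x = \<one>\<^bsub>G\<^esub>")
    case False
    then have "h x \<noteq> \<one>\<^bsub>H\<^esub>" using graph_iso_map_in[OF h_off_one] x by blast
    then show ?thesis
      using torsion_iso[OF G.pa_loop_vertices_nonidentity H.pa_loop_vertices_nonidentity h_off_one]
        x False by blast
  qed (use h1 G.torsion_one H.torsion_one in simp)
  then show ?thesis
    using graph_iso_maps_fixing_one(1)[OF assms(1,2) graph_iso_map_bij[OF h] h1]
      graph_iso_map_adj[OF h_off_one] graph_iso_iff_map by blast
qed

lemma pm_iso_image_one_torsion:
  assumes "pa_loop G" "pa_loop H"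
    and f: "graph_iso_map f (carrier G) (power_adj_pm G) (carrier H) (power_adj_pm H)"
  shows "pa_loop.torsion H (f \<one>\<^bsub>G\<^esub>)"
proof (rule ccontr)
  interpret G: pa_loop G by fact
  interpret H: pa_loop H by fact
  define a where "a = f \<one>\<^bsub>G\<^esub>"
  assume "\<not> H.torsion (f \<one>\<^bsub>G\<^esub>)"
  then have a: "a \<in> carrier H" "\<not> H.torsion a" using graph_iso_map_in[OF f] unfolding a_def by auto
  obtain w where w: "w \<in> carrier G" "f w = lpow H a (-1)"
    using graph_iso_map_surj[OF f] H.lpow_closed[OF a(1)] by metis
  have "power_adj_pm G \<one>\<^bsub>G\<^esub> w"
    using H.nontorsion_adj_inverse(1)[OF a] graph_iso_map_adj[OF f G.one_closed w(1)] w(2)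
    unfolding a_def by simp
  then have "w \<noteq> \<one>\<^bsub>G\<^esub>" "G.torsion w" using G.power_adj_pm_one_iff[OF w(1)] by auto
  moreover have "f w \<noteq> \<one>\<^bsub>H\<^esub>" using H.nontorsion_adj_inverse(2)[OF a] w(2) H.torsion_one by auto
  ultimately have "H.torsion (f w)"
    using torsion_iso[OF G.pa_loop_vertices_carrier H.pa_loop_vertices_carrier f w(1)] by blast
  then show False using H.nontorsion_adj_inverse(2)[OF a] w(2) by simp
qed

lemma pm_iso_torsion_iff:
  assumes "pa_loop G" "pa_loop H"
    and f: "graph_iso_map f (carrier G) (power_adj_pm G) (carrier H) (power_adj_pm H)"
    and x: "x \<in> carrier G"
  shows "pa_loop.torsion G x \<longleftrightarrow> pa_loop.torsion H (f x)"
proof -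
  interpret G: pa_loop G by fact
  interpret H: pa_loop H by fact
  define g where "g = inv_into (carrier G) f"
  have g: "graph_iso_map g (carrier H) (power_adj_pm H) (carrier G) (power_adj_pm G)"
    unfolding g_def by (rule graph_iso_map_inv_into[OF f])
  have f_g: "f (g \<one>\<^bsub>H\<^esub>) = \<one>\<^bsub>H\<^esub>"
    unfolding g_def using bij_betw_inv_into_right[OF graph_iso_map_bij[OF f]] by simp
  consider "x = \<one>\<^bsub>G\<^esub>" | "f x = \<one>\<^bsub>H\<^esub>" | "x \<noteq> \<one>\<^bsub>G\<^esub>" "f x \<noteq> \<one>\<^bsub>H\<^esub>" by blast
  then show ?thesis
  proof cases
    case 1
    then show ?thesis using pm_iso_image_one_torsion[OF assms(1,2) f] G.torsion_one by simp
  next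
    case 2
    then have "x = g \<one>\<^bsub>H\<^esub>"
      using f_g graph_iso_map_eq[OF f x] graph_iso_map_in[OF g] by (metis H.one_closed)
    then show ?thesis using pm_iso_image_one_torsion[OF assms(2,1) g] 2 H.torsion_one by simp
  next
    case 3
    then show ?thesis
      using torsion_iso[OF G.pa_loop_vertices_carrier H.pa_loop_vertices_carrier f] x by blast
  qed
qed

lemma pm_iso_imp_power_graph_iso:
  assumes "pa_loop G" "pa_loop H"
    and iso: "graph_iso (carrier G) (power_adj_pm G) (carrier H) (power_adj_pm H)"
  shows "graph_iso (carrier G) (power_adj G) (carrier H) (power_adj H)"
proof -
  interpret G: pa_loop G by fact
  interpret H: pa_loop H by fact
  obtain f where f: "graph_iso_map f (carrier G) (power_adj_pm G) (carrier H) (power_adj_pm H)"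
    using iso graph_iso_iff_map by blast
  have twins: "closed_twins (carrier H) (power_adj_pm H) (f \<one>\<^bsub>G\<^esub>) \<one>\<^bsub>H\<^esub>"
    unfolding closed_twins_def
  proof (intro conjI ballI)
    fix w assume "w \<in> carrier H"
    then obtain v where v: "v \<in> carrier G" "w = f v" using graph_iso_map_surj[OF f] by blast
    then have "w = f \<one>\<^bsub>G\<^esub> \<or> power_adj_pm H (f \<one>\<^bsub>G\<^esub>) w \<longleftrightarrow> G.torsion v"
      using graph_iso_map_eq[OF f] graph_iso_map_adj[OF f] G.closed_nbhd_one_iff_torsion by simp
    also have "\<dots> \<longleftrightarrow> w = \<one>\<^bsub>H\<^esub> \<or> power_adj_pm H \<one>\<^bsub>H\<^esub> w"
      using pm_iso_torsion_iff[OF assms(1,2) f] v H.closed_nbhd_one_iff_torsion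
        graph_iso_map_in[OF f] by simp
    finally show "w = f \<one>\<^bsub>G\<^esub> \<or> power_adj_pm H (f \<one>\<^bsub>G\<^esub>) w \<longleftrightarrow> w = \<one>\<^bsub>H\<^esub> \<or> power_adj_pm H \<one>\<^bsub>H\<^esub> w" .
  qed (use graph_iso_map_in[OF f] in auto)
  obtain h where h: "graph_iso_map h (carrier G) (power_adj_pm G) (carrier H) (power_adj_pm H)"
    and h1: "h \<one>\<^bsub>G\<^esub> = \<one>\<^bsub>H\<^esub>"
    using graph_iso_map_move_to_twin[OF f twins power_adj_pm_sym power_adj_pm_irrefl] by blast
  show ?thesis
    using graph_iso_maps_fixing_one(2)[OF assms(1,2) graph_iso_map_bij[OF h] h1]
      graph_iso_map_adj[OF h] pm_iso_torsion_iff[OF assms(1,2) h] graph_iso_iff_map by blast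
qed

theorem mainTheorem2:
  fixes G :: "'a monoid" and H :: "'b monoid"
  assumes "power_assoc_loop G" and "power_assoc_loop H"
  shows "graph_iso (carrier G) (power_adj G) (carrier H) (power_adj H) \<longleftrightarrow>
         graph_iso (carrier G) (power_adj_pm G) (carrier H) (power_adj_pm H)"
proof -
  have "pa_loop G" "pa_loop H" using assms by (simp_all add: pa_loop_def)
  then show ?thesis using power_graph_iso_imp_pm_iso pm_iso_imp_power_graph_iso by blast
qed

end
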